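(* Let $1 \le R < P$ be integers and let $\mathcal{S}_{P,R}^+$ be the set of $P\times P$ real symmetric positive semi-definite matrices of rank exactly $R$, equipped with the topology induced from $\mathbb{R}^{P\times P}$. There is no distance (metric) $d : \mathcal{S}_{P,R}^+\times\mathcal{S}_{P,R}^+\to[0,\infty)$ that is continuous and satisfies the affine invariance property $$d(\bm{W}^{\top}\bm{S}\bm{W},\ \bm{W}^{\top}\bm{S}'\bm{W}) = d(\bm{S},\bm{S}')\quad\text{for all } \bm{S},\bm{S}'\in\mathcal{S}_{P,R}^+ \text{ and all invertible } \bm{W}\in\mathbb{R}^{P\times P}.$$
   Context: Note that for invertible $\bm{W}$ and $\bm{S}\in\mathcal{S}_{P,R}^+$, one has $\bm{W}^{\top}\bm{S}\bm{W}\in\mathcal{S}_{P,R}^+$, so the invariance condition is well posed. *)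

theory Defs
  imports "HOL-Analysis.Analysis"
begin

definition psd_matrix :: "real^'n^'n \<Rightarrow> bool" where
  "psd_matrix A \<longleftrightarrow> transpose A = A \<and> (\<forall>x. 0 \<le> x \<bullet> (A *v x))"

text \<open>The set S^+_{P,R}: PSD matrices of rank exactly R (P = CARD('n)).\<close>
definition psd_rank :: "nat \<Rightarrow> (real^'n^'n) set" where
  "psd_rank R = {A. psd_matrix A \<and> rank A = R}"

definition is_metric_on :: "'a set \<Rightarrow> ('a \<Rightarrow> 'a \<Rightarrow> real) \<Rightarrow> bool" where
  "is_metric_on S d \<longleftrightarrow>
     (\<forall>x\<in>S. \<forall>y\<in>S. 0 \<le> d x y) \<and>
     (\<forall>x\<in>S. \<forall>y\<in>S. d x y = 0 \<longleftrightarrow> x = y) \<and>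
     (\<forall>x\<in>S. \<forall>y\<in>S. d x y = d y x) \<and>
     (\<forall>x\<in>S. \<forall>y\<in>S. \<forall>z\<in>S. d x z \<le> d x y + d y z)"

end

theory Submission
  imports Defs
begin

text \<open>
  Take a coordinate projection \<open>S\<close> of rank \<open>R\<close> whose range misses the coordinate \<open>q\<close>,
  and a shear congruent \<open>S'\<close> of it with \<open>S'$q$q = 1\<close>. Scaling coordinate \<open>q\<close> by
  \<open>t \<noteq> 0\<close> fixes \<open>S\<close>, and as \<open>t \<rightarrow> 0\<close> the scaled copies of \<open>S'\<close> converge to \<open>S\<close>.
  An invariant distance is therefore constant along this family, and a continuous
  one must satisfy \<open>d S S' = d S S = 0\<close>, contradicting \<open>S \<noteq> S'\<close>: the orbit of
  \<open>S'\<close> under congruence accumulates at a different matrix.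
\<close>

lemma eq_of_tendsto_in_level_set:
  fixes d :: "'a::topological_space \<Rightarrow> 'a \<Rightarrow> real"
  assumes metric: "is_metric_on X d"
    and cont: "continuous_on (X \<times> X) (\<lambda>(x, y). d x y)"
    and "x \<in> X" "y \<in> X" "F \<noteq> bot"
    and lim: "(f \<longlongrightarrow> x) F"
    and level: "\<forall>\<^sub>F t in F. f t \<in> X \<and> d x (f t) = d x y"
  shows "x = y"
proof -
  have "((\<lambda>t. (x, f t)) \<longlongrightarrow> (x, x)) F"
    using lim by (intro tendsto_Pair tendsto_const)
  moreover have "\<forall>\<^sub>F t in F. (x, f t) \<in> X \<times> X"
    using level by (rule eventually_mono) (simp add: \<open>x \<in> X\<close>)
  ultimately have "((\<lambda>t. d x (f t)) \<longlongrightarrow> d x x) F"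
    using continuous_on_tendsto_compose[OF cont] \<open>x \<in> X\<close> by fastforce
  moreover have "((\<lambda>t. d x (f t)) \<longlongrightarrow> d x y) F"
    by (rule tendsto_eventually, rule eventually_mono[OF level]) simp
  ultimately have "d x y = d x x"
    using \<open>F \<noteq> bot\<close> by (metis tendsto_unique)
  with metric \<open>x \<in> X\<close> \<open>y \<in> X\<close> show ?thesis
    unfolding is_metric_on_def by metis
qed

lemma psd_matrix_congruence:
  fixes A W :: "real^'n^'n"
  assumes "psd_matrix A"
  shows "psd_matrix (transpose W ** A ** W)"
proof -
  have sym: "transpose A = A" and nonneg: "\<And>x. 0 \<le> x \<bullet> (A *v x)"
    using assms by (auto simp: psd_matrix_def)
  have "0 \<le> x \<bullet> ((transpose W ** A ** W) *v x)" for x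
  proof -
    have "x \<bullet> ((transpose W ** A ** W) *v x) = x \<bullet> (transpose W *v (A *v (W *v x)))"
      by (simp add: matrix_vector_mul_assoc matrix_mul_assoc)
    also have "\<dots> = (W *v x) \<bullet> (A *v (W *v x))"
      by (metis dot_lmul_matrix vector_transpose_matrix)
    finally show ?thesis using nonneg by simp
  qed
  moreover have "transpose (transpose W ** A ** W) = transpose W ** A ** W"
    by (simp add: matrix_transpose_mul sym matrix_mul_assoc)
  ultimately show ?thesis by (simp add: psd_matrix_def)
qed

lemma rank_congruence:
  fixes A W :: "real^'n^'n"
  assumes "invertible W"
  shows "rank (transpose W ** A ** W) = rank A"
proof (rule antisym)
  show "rank (transpose W ** A ** W) \<le> rank A"
    by (metis rank_mul_le_left rank_mul_le_right order_trans)
  obtain V where WV: "W ** V = mat 1" using assms invertible_def by blast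
  then have "transpose V ** transpose W = mat 1"
    by (metis matrix_transpose_mul transpose_mat)
  then have "transpose V ** (transpose W ** A ** W) ** V = A ** (W ** V)"
    by (metis matrix_mul_assoc matrix_mul_lid)
  then have "A = transpose V ** (transpose W ** A ** W) ** V"
    using WV by simp
  then show "rank A \<le> rank (transpose W ** A ** W)"
    by (metis rank_mul_le_left rank_mul_le_right order_trans)
qed

lemma psd_rank_congruence:
  fixes A W :: "real^'n^'n"
  assumes "A \<in> psd_rank R" "invertible W"
  shows "transpose W ** A ** W \<in> psd_rank R"
  using assms by (simp add: psd_rank_def psd_matrix_congruence rank_congruence)

definition diag_mat :: "('n::finite \<Rightarrow> 'a::semiring_1) \<Rightarrow> 'a^'n^'n" where
  "diag_mat f = (\<chi> a b. if a = b then f a else 0)"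

lemma diag_mat_mul_entry:
  "(diag_mat f ** A) $ a $ b = f a * A $ a $ b"
  "(A ** diag_mat f) $ a $ b = A $ a $ b * f b"
  by (simp_all add: diag_mat_def matrix_matrix_mult_def if_distrib[of "\<lambda>t. t * _"]
      if_distrib[of "\<lambda>t. _ * t"] cong: if_cong)

lemma transpose_diag_mat: "transpose (diag_mat f) = diag_mat f"
  by (simp add: diag_mat_def transpose_def vec_eq_iff)

lemma diag_mat_congruence:
  "transpose (diag_mat f) ** A ** diag_mat f = (\<chi> a b. f a * A $ a $ b * f b)"
  by (simp add: vec_eq_iff diag_mat_mul_entry transpose_diag_mat)

lemma diag_mat_mul: "diag_mat f ** diag_mat g = diag_mat (\<lambda>a. f a * g a)"
  by (simp add: vec_eq_iff diag_mat_mul_entry) (simp add: diag_mat_def)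

lemma invertible_diag_mat:
  fixes f :: "'n::finite \<Rightarrow> 'a::field"
  assumes "\<And>a. f a \<noteq> 0"
  shows "invertible (diag_mat f)"
proof -
  have "diag_mat f ** diag_mat (\<lambda>a. inverse (f a)) = mat 1"
       "diag_mat (\<lambda>a. inverse (f a)) ** diag_mat f = mat 1"
    using assms by (simp_all add: diag_mat_mul) (simp_all add: diag_mat_def mat_def)
  then show ?thesis unfolding invertible_def by blast
qed

lemma congruence_diag_mat_entry:
  fixes V :: "'a::comm_semiring_1^'n^'n"
  shows "(transpose V ** diag_mat f ** V) $ a $ b = (\<Sum>k\<in>UNIV. f k * V $ k $ a * V $ k $ b)"
proof -
  have "(transpose V ** diag_mat f ** V) $ a $ b = (transpose V ** (diag_mat f ** V)) $ a $ b"
    by (simp add: matrix_mul_assoc)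
  also have "\<dots> = (\<Sum>k\<in>UNIV. V $ k $ a * (f k * V $ k $ b))"
    unfolding matrix_matrix_mult_def[of "transpose V" "diag_mat f ** V"]
    by (simp add: diag_mat_mul_entry transpose_def)
  finally show ?thesis by (simp add: mult_ac)
qed

lemma diag_indicator_in_psd_rank:
  "diag_mat (indicator I) \<in> psd_rank (card I)" for I :: "'n::finite set"
proof -
  let ?S = "diag_mat (indicator I) :: real^'n^'n"
  have Sv: "?S *v x = (\<chi> a. if a \<in> I then x $ a else 0)" for x
    by (simp add: diag_mat_def matrix_vector_mult_def vec_eq_iff indicator_def
        if_distrib[of "\<lambda>t. t * _"] cong: if_cong)
  have "0 \<le> x \<bullet> (?S *v x)" for x
    unfolding Sv inner_vec_def by (intro sum_nonneg) auto
  then have "psd_matrix ?S" by (simp add: psd_matrix_def transpose_diag_mat)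
  moreover have "range (\<lambda>x. ?S *v x) = {x::real^'n. \<forall>i. i \<notin> I \<longrightarrow> x $ i = 0}"
  proof (intro set_eqI iffI)
    fix y :: "real^'n" assume "y \<in> {x. \<forall>i. i \<notin> I \<longrightarrow> x $ i = 0}"
    then have "?S *v y = y" unfolding Sv by (auto simp: vec_eq_iff)
    then show "y \<in> range (\<lambda>x. ?S *v x)" by (metis rangeI)
  qed (auto simp: Sv)
  then have "rank ?S = card I"
    by (simp add: rank_dim_range dim_vec_eq[symmetric] dim_substandard_cart)
  ultimately show ?thesis by (simp add: psd_rank_def)
qed

definition shear_mat :: "'n::finite \<Rightarrow> 'n \<Rightarrow> 'a::semiring_1 \<Rightarrow> 'a^'n^'n" where
  "shear_mat i q c = (\<chi> a b. if a = b then 1 else if a = i \<and> b = q then c else 0)"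

lemma shear_mat_mul:
  fixes c c' :: "'a::semiring_1"
  assumes "i \<noteq> q"
  shows "shear_mat i q c ** shear_mat i q c' = shear_mat i q (c + c')"
proof -
  have entry: "shear_mat i q c $ a $ k =
      (if k = a then 1 else 0) + (if a = i \<and> k = q then c else 0)" for c :: 'a and a k
    using assms by (auto simp: shear_mat_def)
  have "(\<Sum>k\<in>UNIV. shear_mat i q c $ a $ k * shear_mat i q c' $ k $ b)
        = shear_mat i q c' $ a $ b + (if a = i then c * shear_mat i q c' $ q $ b else 0)" for a b
    unfolding entry[of c] distrib_right sum.distrib
    by (simp add: if_distrib[of "\<lambda>t. t * _"] cong: if_cong)
  then show ?thesis
    using assms by (auto simp: matrix_matrix_mult_def vec_eq_iff shear_mat_def algebra_simps)
qed

lemma invertible_shear_mat: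
  fixes c :: "'a::ring_1"
  assumes "i \<noteq> q"
  shows "invertible (shear_mat i q c)"
proof -
  have "shear_mat i q (0::'a) = mat 1"
    by (simp add: shear_mat_def mat_def vec_eq_iff)
  then show ?thesis
    unfolding invertible_def using shear_mat_mul[OF assms, of c "-c"] shear_mat_mul[OF assms, of "-c" c]
    by auto
qed

lemma shear_congruence_diag_entry:
  fixes f :: "'n::finite \<Rightarrow> 'a::comm_semiring_1" and c :: 'a
  assumes "i \<noteq> q"
  shows "a \<noteq> q \<Longrightarrow> b \<noteq> q \<Longrightarrow>
           (transpose (shear_mat i q c) ** diag_mat f ** shear_mat i q c) $ a $ b = diag_mat f $ a $ b"
    and "(transpose (shear_mat i q c) ** diag_mat f ** shear_mat i q c) $ q $ q = f q + c * c * f i"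
proof -
  have V: "shear_mat i q c $ k $ a = (if k = a then 1 else if k = i \<and> a = q then c else 0)" for k a
    by (simp add: shear_mat_def)
  show "a \<noteq> q \<Longrightarrow> b \<noteq> q \<Longrightarrow>
      (transpose (shear_mat i q c) ** diag_mat f ** shear_mat i q c) $ a $ b = diag_mat f $ a $ b"
    unfolding congruence_diag_mat_entry by (simp add: V diag_mat_def if_distrib[of "\<lambda>t. t * _"]
        if_distrib[of "\<lambda>t. _ * t"] cong: if_cong)
  have "(\<Sum>k\<in>UNIV. f k * shear_mat i q c $ k $ q * shear_mat i q c $ k $ q)
        = (\<Sum>k\<in>{q, i}. f k * shear_mat i q c $ k $ q * shear_mat i q c $ k $ q)"
    by (rule sum.mono_neutral_right) (auto simp: V)
  then show "(transpose (shear_mat i q c) ** diag_mat f ** shear_mat i q c) $ q $ q = f q + c * c * f i"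
    using assms unfolding congruence_diag_mat_entry by (simp add: V mult_ac)
qed

definition scale_coord_mat :: "'n::finite \<Rightarrow> 'a::semiring_1 \<Rightarrow> 'a^'n^'n" where
  "scale_coord_mat q t = diag_mat (\<lambda>a. if a = q then t else 1)"

lemma invertible_scale_coord_mat:
  "t \<noteq> 0 \<Longrightarrow> invertible (scale_coord_mat q (t::'a::field))"
  unfolding scale_coord_mat_def by (rule invertible_diag_mat) simp

lemma scale_coord_congruence_fixes:
  assumes "\<And>b. A $ q $ b = 0" "\<And>a. A $ a $ q = 0"
  shows "transpose (scale_coord_mat q t) ** A ** scale_coord_mat q t = A"
  using assms by (simp add: scale_coord_mat_def diag_mat_congruence vec_eq_iff)

lemma tendsto_scale_coord_congruence:
  fixes A :: "real^'n^'n"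
  shows "((\<lambda>t. transpose (scale_coord_mat q t) ** A ** scale_coord_mat q t)
          \<longlongrightarrow> (\<chi> a b. if a = q \<or> b = q then 0 else A $ a $ b)) (at 0)"
proof -
  define s where "s t a = (if a = q then t else 1)" for t :: real and a
  have "((\<lambda>t. s t a) \<longlongrightarrow> s 0 a) (at 0)" for a
    by (cases "a = q") (simp_all add: s_def)
  then have "((\<lambda>t. \<chi> a b. s t a * A $ a $ b * s t b) \<longlongrightarrow> (\<chi> a b. s 0 a * A $ a $ b * s 0 b)) (at 0)"
    by (intro tendsto_vec_lambda tendsto_mult tendsto_const)
  moreover have "(\<chi> a b. s 0 a * A $ a $ b * s 0 b) = (\<chi> a b. if a = q \<or> b = q then 0 else A $ a $ b)"
    by (simp add: s_def vec_eq_iff)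
  ultimately show ?thesis
    by (simp add: scale_coord_mat_def diag_mat_congruence s_def[abs_def])
qed

lemma obtain_index_subset:
  assumes "1 \<le> R" "R < CARD('n)"
  obtains I :: "'n::finite set" and q i where "card I = R" "q \<notin> I" "i \<in> I"
proof -
  fix q :: 'n
  have "R \<le> card (UNIV - {q})" using assms by (simp add: card_Diff_singleton)
  then obtain I where "I \<subseteq> UNIV - {q}" "card I = R"
    by (meson obtain_subset_with_card_n)
  moreover from this assms obtain i where "i \<in> I" by fastforce
  ultimately show thesis by (intro that[of I q i]) auto
qed

lemma psd_rank_congruence_orbit_accumulates:
  assumes "1 \<le> R" "R < CARD('n)"
  obtains S S' :: "real^'n^'n" and W :: "real \<Rightarrow> real^'n^'n"
  where "S \<in> psd_rank R" "S' \<in> psd_rank R" "S \<noteq> S'"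
    and "\<forall>\<^sub>F t in at 0. invertible (W t) \<and> transpose (W t) ** S ** W t = S"
    and "((\<lambda>t. transpose (W t) ** S' ** W t) \<longlongrightarrow> S) (at 0)"
proof -
  obtain I :: "'n set" and q i where I: "card I = R" "q \<notin> I" "i \<in> I"
    using obtain_index_subset[OF assms] .
  then have "i \<noteq> q" by auto
  define S :: "real^'n^'n" where "S = diag_mat (indicator I)"
  define S' where "S' = transpose (shear_mat i q 1) ** S ** shear_mat i q 1"
  have "S \<in> psd_rank R" "S' \<in> psd_rank R"
    using diag_indicator_in_psd_rank[of I] psd_rank_congruence invertible_shear_mat[OF \<open>i \<noteq> q\<close>]
    by (auto simp: S_def S'_def I)
  moreover have "S \<noteq> S'"
  proof -
    have "S' $ q $ q = 1"
      using I by (simp add: S'_def S_def shear_congruence_diag_entry(2)[OF \<open>i \<noteq> q\<close>])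
    moreover have "S $ q $ q = 0"
      using I by (simp add: S_def diag_mat_def)
    ultimately show ?thesis by auto
  qed
  moreover have "\<forall>\<^sub>F t in at 0. invertible (scale_coord_mat q t) \<and>
                    transpose (scale_coord_mat q t) ** S ** scale_coord_mat q t = S"
  proof -
    have "transpose (scale_coord_mat q t) ** S ** scale_coord_mat q t = S" for t :: real
      by (rule scale_coord_congruence_fixes) (use \<open>q \<notin> I\<close> in \<open>auto simp: S_def diag_mat_def\<close>)
    then show ?thesis
      by (auto simp: eventually_at_filter invertible_scale_coord_mat intro!: always_eventually)
  qed
  moreover have "(\<chi> a b. if a = q \<or> b = q then 0 else S' $ a $ b) = S"
    using \<open>q \<notin> I\<close> shear_congruence_diag_entry(1)[OF \<open>i \<noteq> q\<close>]
    by (auto simp: vec_eq_iff S'_def S_def) (auto simp: diag_mat_def)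
  then have "((\<lambda>t. transpose (scale_coord_mat q t) ** S' ** scale_coord_mat q t) \<longlongrightarrow> S) (at 0)"
    using tendsto_scale_coord_congruence[of q S'] by simp
  ultimately show thesis by (rule that)
qed

theorem mainTheorem4:
  fixes R :: nat and d :: "real^'n^'n \<Rightarrow> real^'n^'n \<Rightarrow> real"
  assumes "1 \<le> R" and "R < CARD('n)"
  shows "\<not> (is_metric_on (psd_rank R) d \<and>
             continuous_on (psd_rank R \<times> psd_rank R) (\<lambda>(S, S'). d S S') \<and>
             (\<forall>S\<in>psd_rank R. \<forall>S'\<in>psd_rank R. \<forall>W::real^'n^'n. invertible W \<longrightarrow>
                d (transpose W ** S ** W) (transpose W ** S' ** W) = d S S'))"
proof
  assume "is_metric_on (psd_rank R) d \<and>
          continuous_on (psd_rank R \<times> psd_rank R) (\<lambda>(S, S'). d S S') \<and>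
          (\<forall>S\<in>psd_rank R. \<forall>S'\<in>psd_rank R. \<forall>W::real^'n^'n. invertible W \<longrightarrow>
             d (transpose W ** S ** W) (transpose W ** S' ** W) = d S S')"
  then have metric: "is_metric_on (psd_rank R) d"
    and cont: "continuous_on (psd_rank R \<times> psd_rank R) (\<lambda>(S, S'). d S S')"
    and invariant: "\<And>S S' W. S \<in> psd_rank R \<Longrightarrow> S' \<in> psd_rank R \<Longrightarrow> invertible W \<Longrightarrow>
                d (transpose W ** S ** W) (transpose W ** S' ** W) = d S S'"
    by auto
  obtain S S' :: "real^'n^'n" and W :: "real \<Rightarrow> real^'n^'n"
    where S: "S \<in> psd_rank R" and S': "S' \<in> psd_rank R" and "S \<noteq> S'"
      and W: "\<forall>\<^sub>F t in at 0. invertible (W t) \<and> transpose (W t) ** S ** W t = S"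
      and lim: "((\<lambda>t. transpose (W t) ** S' ** W t) \<longlongrightarrow> S) (at 0)"
    using psd_rank_congruence_orbit_accumulates[OF assms] .
  have "\<forall>\<^sub>F t in at 0. transpose (W t) ** S' ** W t \<in> psd_rank R \<and>
                 d S (transpose (W t) ** S' ** W t) = d S S'"
    using W by (rule eventually_mono) (metis invariant[OF S S'] psd_rank_congruence[OF S'])
  then have "S = S'"
    by (intro eq_of_tendsto_in_level_set[OF metric cont S S' _ lim]) simp_all
  with \<open>S \<noteq> S'\<close> show False ..
qed

end
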